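(* Let $\mathcal S\subset\{1,\dots,N\}$, let $\boldsymbol\rho\in\mathbb C^N$ be supported in $\mathcal S$, let $\mathbf d=\mathcal G\boldsymbol\rho$ and $\mathcal Y=\{\vec{\mathbf z}_j:j\in\mathcal S\}$. Let $0<\varepsilon<r<1$ and let $\mathcal S_\varepsilon\subset\mathcal S$ be such that $\mathcal Y\subset\bigcup_{q\in\mathcal S_\varepsilon}\mathcal B_\varepsilon(\vec{\mathbf z}_q)$, and such that the balls $\mathcal B_r(\vec{\mathbf z}_q)$, $q\in\mathcal S_\varepsilon$, are pairwise disjoint (hence so are the balls $\mathcal B_\varepsilon(\vec{\mathbf z}_q)$, $q\in\mathcal S_\varepsilon$). Let $\mathcal Y_\varepsilon=\{\vec{\mathbf z}_j:j\in\mathcal S_\varepsilon\}$ and assume $\mathcal I(\mathcal Y_\varepsilon)<1$. Define the effective source vector $\bar{\boldsymbol\rho}\in\mathbb C^N$ by $$\bar\rho_j=\sum_{q\in\mathcal S:\ \vec{\mathbf z}_q\in\mathcal B_\varepsilon(\vec{\mathbf z}_j)}\rho_q\,\langle\mathbf g_j,\mathbf g_q\rangle\ \ (j\in\mathcal S_\varepsilon),\qquad\bar\rho_j=0\ \ (j\notin\mathcal S_\varepsilon).$$ Let $\boldsymbol\rho_\star$ be a minimizer of $\|\mathbf x\|_1$ over $\mathbf x\in\mathbb C^N$ subject to $\mathcal G\mathbf x=\mathbf d$, and decompose $\boldsymbol\rho_\star=\boldsymbol\rho_\star^{(i)}+\boldsymbol\rho_\star^{(o)}$ with $(\boldsymbol\rho_\star^{(i)})_q=(\boldsymbol\rho_\star)_q$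 if $\vec{\mathbf z}_q\in\bigcup_{j\in\mathcal S_\varepsilon}\mathcal B_r(\vec{\mathbf z}_j)$ and $0$ otherwise. Then $$\|\boldsymbol\rho_\star^{(o)}\|_1\le\frac{2\,\mathcal I(\mathcal Y_\varepsilon)}{r}\|\boldsymbol\rho_\star\|_1+\frac{\|\boldsymbol\rho\|_1-\|\bar{\boldsymbol\rho}\|_1}{r}.$$
   Context: Let $W$ be a set (the imaging region) and $M\ge1$. For each $\vec{\mathbf y}\in W$ let $\mathbf g_{\vec{\mathbf y}}\in\mathbb C^M$ be a vector with $\|\mathbf g_{\vec{\mathbf y}}\|_2=1$. Let $\vec{\mathbf z}_1,\dots,\vec{\mathbf z}_N\in W$ be distinct (grid) points, write $\mathbf g_j=\mathbf g_{\vec{\mathbf z}_j}$, and let $\mathcal G\in\mathbb C^{M\times N}$ be the matrix with columns $\mathbf g_j$. Inner product: $\langle\mathbf u,\mathbf v\rangle=\mathbf u^H\mathbf v=\sum_i\overline{u_i}v_i$. $\|\cdot\|_1$ is the $\ell_1$ norm. Semi-metric: $\mathscr D(\vec{\mathbf y},\vec{\mathbf y}')=1-|\langle\mathbf g_{\vec{\mathbf y}},\mathbf g_{\vec{\mathbf y}'}\rangle|$; ball $\mathcal B_r(\vec{\mathbf y})=\{\vec{\mathbf y}'\in W:\ \mathscr D(\vec{\mathbf y},\vec{\mathbf y}')<r\}$. Interaction coefficient: for a finite set $\mathcal Y\subset W$ and each $q$, let $\mathscr N(\vec{\mathbf z}_q)\in\mathcal Y$ be a point of $\mathcal Y$ minimizing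 $\mathscr D(\vec{\mathbf z}_q,\cdot)$ over $\mathcal Y$; then $\mathcal I(\mathcal Y)=\max_{q=1,\dots,N}\sum_{\vec{\mathbf y}\in\mathcal Y\setminus\{\mathscr N(\vec{\mathbf z}_q)\}}|\langle\mathbf g_{\vec{\mathbf y}},\mathbf g_q\rangle|$. *)

theory Defs
  imports "HOL-Analysis.Analysis"
begin

text \<open>Vectors in C^M are modelled as functions nat => complex, with indices 0..M-1;
  vectors in C^N likewise with indices 0..N-1 (grid index j corresponds to paper index j+1).\<close>

definition cinner :: "nat \<Rightarrow> (nat \<Rightarrow> complex) \<Rightarrow> (nat \<Rightarrow> complex) \<Rightarrow> complex" where
  "cinner M u v = (\<Sum>i<M. cnj (u i) * v i)"

definition l2norm :: "nat \<Rightarrow> (nat \<Rightarrow> complex) \<Rightarrow> real" where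
  "l2norm M u = sqrt (\<Sum>i<M. (cmod (u i))\<^sup>2)"

definition l1norm :: "nat \<Rightarrow> (nat \<Rightarrow> complex) \<Rightarrow> real" where
  "l1norm N x = (\<Sum>j<N. cmod (x j))"

definition semi_dist :: "nat \<Rightarrow> ('w \<Rightarrow> nat \<Rightarrow> complex) \<Rightarrow> 'w \<Rightarrow> 'w \<Rightarrow> real" where
  "semi_dist M g y y' = 1 - cmod (cinner M (g y) (g y'))"

definition sball :: "nat \<Rightarrow> ('w \<Rightarrow> nat \<Rightarrow> complex) \<Rightarrow> 'w set \<Rightarrow> real \<Rightarrow> 'w \<Rightarrow> 'w set" where
  "sball M g W r y = {y' \<in> W. semi_dist M g y y' < r}"

definition Gmul :: "nat \<Rightarrow> ('w \<Rightarrow> nat \<Rightarrow> complex) \<Rightarrow> (nat \<Rightarrow> 'w) \<Rightarrow> (nat \<Rightarrow> complex) \<Rightarrow> nat \<Rightarrow> complex" where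
  "Gmul N g z x i = (\<Sum>j<N. g (z j) i * x j)"

text \<open>Interaction coefficient I(Y), relative to a choice nn of nearest points:
  nn q is a point of Y minimizing D(z_q, .) over Y.\<close>
definition is_nearest :: "nat \<Rightarrow> ('w \<Rightarrow> nat \<Rightarrow> complex) \<Rightarrow> 'w set \<Rightarrow> 'w \<Rightarrow> 'w \<Rightarrow> bool" where
  "is_nearest M g Y x y \<longleftrightarrow> y \<in> Y \<and> (\<forall>y'\<in>Y. semi_dist M g x y \<le> semi_dist M g x y')"

definition interaction_coeff :: "nat \<Rightarrow> nat \<Rightarrow> ('w \<Rightarrow> nat \<Rightarrow> complex) \<Rightarrow> (nat \<Rightarrow> 'w)
    \<Rightarrow> (nat \<Rightarrow> 'w) \<Rightarrow> 'w set \<Rightarrow> real" where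
  "interaction_coeff M N g z nn Y =
     Max ((\<lambda>q. \<Sum>y\<in>Y - {nn q}. cmod (cinner M (g y) (g (z q)))) ` {..<N})"

end

theory Submission
  imports Defs
begin

text \<open>Dual certificate argument. With the unimodular signs s_j of the effective source, put
  h_q = sum over j in S_eps of conj(s_j) <g_j, g_q>. Because the r-balls around the cluster
  centres are disjoint, the nearest centre of z_q contributes at most 1 to |h_q|, and at most
  1 - r when z_q lies outside all r-balls, while the other centres contribute at most I in total.
  Since sum_q x_q h_q only depends on G x, it takes the same value at rho_star and at rho.
  This value is at most (1 + I) |rho_star|_1 - r |rho_star^(o)|_1 in modulus, and at least
  |rho_bar|_1 - I |rho|_1, because every source point lies in the eps-ball of its nearest centre.
  Minimality gives |rho_star|_1 <= |rho|_1, and I < 1 lets us trade I |rho|_1 for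
  I |rho_star|_1.\<close>

lemma cmod_cinner_commute: "cmod (cinner M v u) = cmod (cinner M u v)"
proof -
  have "cinner M v u = cnj (cinner M u v)" by (simp add: cinner_def mult.commute)
  then show ?thesis by simp
qed

lemma semi_dist_commute: "semi_dist M g y y' = semi_dist M g y' y"
  unfolding semi_dist_def by (metis cmod_cinner_commute)

lemma cmod_cinner_le_1:
  assumes "l2norm M u = 1" "l2norm M v = 1"
  shows "cmod (cinner M u v) \<le> 1"
proof -
  have su: "(\<Sum>i<M. (cmod (u i))\<^sup>2) = 1" and sv: "(\<Sum>i<M. (cmod (v i))\<^sup>2) = 1"
    using assms unfolding l2norm_def by simp_all
  have "cmod (cinner M u v) \<le> (\<Sum>i<M. cmod (cnj (u i) * v i))"
    unfolding cinner_def by (rule norm_sum)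
  also have "\<dots> \<le> (\<Sum>i<M. ((cmod (u i))\<^sup>2 + (cmod (v i))\<^sup>2) / 2)"
  proof (rule sum_mono)
    fix i
    have "0 \<le> (cmod (u i) - cmod (v i))\<^sup>2" by simp
    then show "cmod (cnj (u i) * v i) \<le> ((cmod (u i))\<^sup>2 + (cmod (v i))\<^sup>2) / 2"
      by (simp add: norm_mult power2_eq_square algebra_simps)
  qed
  also have "\<dots> = 1" using su sv by (simp add: sum_divide_distrib[symmetric] sum.distrib)
  finally show ?thesis .
qed

lemma cinner_Gmul: "cinner M u (Gmul N g z x) = (\<Sum>q<N. x q * cinner M u (g (z q)))"
  unfolding cinner_def Gmul_def
  by (simp add: sum_distrib_left sum.swap[of _ "{..<M}"] mult_ac)

lemma cnj_sgn_mult: "cnj (sgn x) * x = complex_of_real (cmod x)"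
proof (cases "x = 0")
  case False
  have "cnj (sgn x) * x = x * cnj x / complex_of_real (cmod x)"
    by (simp add: sgn_eq)
  also have "\<dots> = complex_of_real ((cmod x)\<^sup>2) / complex_of_real (cmod x)"
    using complex_norm_square[of x] by (simp del: of_real_power)
  also have "\<dots> = complex_of_real (cmod x)" using False
    by (simp add: power2_eq_square)
  finally show ?thesis .
qed simp

locale separated_centres =
  fixes W :: "'w set" and M N :: nat and g :: "'w \<Rightarrow> nat \<Rightarrow> complex"
    and z :: "nat \<Rightarrow> 'w" and S\<epsilon> :: "nat set" and r :: real and nn :: "nat \<Rightarrow> 'w"
  assumes g_norm: "\<forall>y\<in>W. l2norm M (g y) = 1"
    and z_in: "\<forall>j<N. z j \<in> W"
    and z_inj: "inj_on z {..<N}"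
    and centres_sub: "S\<epsilon> \<subseteq> {..<N}"
    and disj: "\<forall>q\<in>S\<epsilon>. \<forall>q'\<in>S\<epsilon>. q \<noteq> q' \<longrightarrow> sball M g W r (z q) \<inter> sball M g W r (z q') = {}"
    and nn: "\<forall>q<N. is_nearest M g (z ` S\<epsilon>) (z q) (nn q)"
begin

abbreviation corr :: "nat \<Rightarrow> nat \<Rightarrow> complex" where
  "corr j q \<equiv> cinner M (g (z j)) (g (z q))"

abbreviation I :: real where
  "I \<equiv> interaction_coeff M N g z nn (z ` S\<epsilon>)"

definition certificate :: "(nat \<Rightarrow> complex) \<Rightarrow> nat \<Rightarrow> complex" where
  "certificate s q = (\<Sum>j\<in>S\<epsilon>. cnj (s j) * corr j q)"

definition outer_part :: "(nat \<Rightarrow> complex) \<Rightarrow> nat \<Rightarrow> complex" where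
  "outer_part x q = (if z q \<in> (\<Union>j\<in>S\<epsilon>. sball M g W r (z j)) then 0 else x q)"

lemma finite_centres: "finite S\<epsilon>"
  using centres_sub finite_nat_iff_bounded by blast

lemma inj_on_centres: "inj_on z S\<epsilon>"
  using z_inj centres_sub inj_on_subset by blast

lemma nearest_centre:
  assumes "q < N"
  obtains j where "j \<in> S\<epsilon>" "nn q = z j"
  using nn assms unfolding is_nearest_def by blast

lemma cmod_corr_le_1: "a < N \<Longrightarrow> b < N \<Longrightarrow> cmod (corr a b) \<le> 1"
  by (rule cmod_cinner_le_1) (use g_norm z_in in auto)

text \<open>The nearest centre is at least as close, hence also within r, and the r-balls of
  distinct centres are disjoint.\<close>
lemma nearest_eq_if_close:
  assumes q: "q < N" and j: "j \<in> S\<epsilon>" and close: "semi_dist M g (z j) (z q) < r"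
  shows "nn q = z j"
proof -
  obtain j0 where j0: "j0 \<in> S\<epsilon>" "nn q = z j0" using nearest_centre q .
  have "is_nearest M g (z ` S\<epsilon>) (z q) (z j0)"
    using nn q j0(2) by metis
  then have "semi_dist M g (z q) (z j0) \<le> semi_dist M g (z q) (z j)"
    unfolding is_nearest_def using j by blast
  with close have "semi_dist M g (z j0) (z q) < r"
    by (metis semi_dist_commute order.strict_trans1)
  with close have in_both: "z q \<in> sball M g W r (z j0) \<inter> sball M g W r (z j)"
    using z_in q unfolding sball_def by simp
  have "j0 = j"
  proof (rule ccontr)
    assume "j0 \<noteq> j"
    with disj j0(1) j have "sball M g W r (z j0) \<inter> sball M g W r (z j) = {}"
      by blast
    with in_both show False by blast
  qed
  with j0 show ?thesis by simp
qed

lemma certificate_minus_nearest_le: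
  assumes s: "\<And>j. cmod (s j) \<le> 1" and q: "q < N" and j0: "j0 \<in> S\<epsilon>" "nn q = z j0"
  shows "cmod (certificate s q - cnj (s j0) * corr j0 q) \<le> I"
proof -
  have "cmod (certificate s q - cnj (s j0) * corr j0 q)
      = cmod (\<Sum>j\<in>S\<epsilon>-{j0}. cnj (s j) * corr j q)"
    unfolding certificate_def by (simp add: sum.remove[OF finite_centres j0(1)])
  also have "\<dots> \<le> (\<Sum>j\<in>S\<epsilon>-{j0}. cmod (cnj (s j) * corr j q))"
    by (rule norm_sum)
  also have "\<dots> \<le> (\<Sum>j\<in>S\<epsilon>-{j0}. cmod (corr j q))"
    by (rule sum_mono) (simp add: norm_mult mult_left_le_one_le s)
  also have "\<dots> = (\<Sum>y\<in>z ` S\<epsilon> - {nn q}. cmod (cinner M (g y) (g (z q))))"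
  proof -
    have "z ` S\<epsilon> - {nn q} = z ` (S\<epsilon> - {j0})"
      using j0 inj_on_centres by (auto simp: inj_on_def)
    moreover have "inj_on z (S\<epsilon> - {j0})" using inj_on_centres inj_on_subset by blast
    ultimately show ?thesis by (simp add: sum.reindex)
  qed
  also have "\<dots> \<le> I" unfolding interaction_coeff_def
    by (rule Max_ge) (use q in auto)
  finally show ?thesis .
qed

lemma cmod_certificate_le:
  assumes s: "\<And>j. cmod (s j) \<le> 1" and q: "q < N"
  shows "cmod (certificate s q)
    \<le> 1 + I - (if z q \<in> (\<Union>j\<in>S\<epsilon>. sball M g W r (z j)) then 0 else r)"
proof -
  obtain j0 where j0: "j0 \<in> S\<epsilon>" "nn q = z j0" using nearest_centre q .
  have near: "cmod (cnj (s j0) * corr j0 q) \<le> cmod (corr j0 q)"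
    by (simp add: norm_mult mult_left_le_one_le s)
  have "cmod (corr j0 q) \<le> 1 - (if z q \<in> (\<Union>j\<in>S\<epsilon>. sball M g W r (z j)) then 0 else r)"
  proof (cases "z q \<in> (\<Union>j\<in>S\<epsilon>. sball M g W r (z j))")
    case True
    then show ?thesis using cmod_corr_le_1 q j0 centres_sub by auto
  next
    case False
    then have "z q \<notin> sball M g W r (z j0)"
      using j0 by blast
    then have "r \<le> semi_dist M g (z j0) (z q)" using z_in q unfolding sball_def by auto
    with False show ?thesis unfolding semi_dist_def by simp
  qed
  moreover have "cmod (certificate s q)
      \<le> cmod (cnj (s j0) * corr j0 q) + cmod (certificate s q - cnj (s j0) * corr j0 q)"
    by (metis add.commute diff_add_cancel norm_triangle_ineq)
  ultimately show ?thesis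
    using near certificate_minus_nearest_le[of s, OF s q j0] by linarith
qed

lemma certificate_pairing:
  "(\<Sum>q<N. x q * certificate s q) = (\<Sum>j\<in>S\<epsilon>. cnj (s j) * cinner M (g (z j)) (Gmul N g z x))"
  by (simp add: certificate_def cinner_Gmul sum_distrib_left sum_distrib_right
      sum.swap[of _ S\<epsilon>] mult_ac)

lemma certificate_pairing_eq:
  assumes "\<forall>i<M. Gmul N g z x i = Gmul N g z y i"
  shows "(\<Sum>q<N. x q * certificate s q) = (\<Sum>q<N. y q * certificate s q)"
  using assms unfolding certificate_pairing by (simp add: cinner_def)

lemma cmod_certificate_pairing_le:
  assumes s: "\<And>j. cmod (s j) \<le> 1"
  shows "cmod (\<Sum>q<N. x q * certificate s q)
    \<le> (1 + I) * l1norm N x - r * l1norm N (outer_part x)"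
proof -
  have "cmod (\<Sum>q<N. x q * certificate s q) \<le> (\<Sum>q<N. cmod (x q * certificate s q))"
    by (rule norm_sum)
  also have "\<dots> \<le> (\<Sum>q<N. cmod (x q) *
      (1 + I - (if z q \<in> (\<Union>j\<in>S\<epsilon>. sball M g W r (z j)) then 0 else r)))"
  proof (rule sum_mono)
    fix q assume "q \<in> {..<N}"
    then show "cmod (x q * certificate s q) \<le> cmod (x q) *
      (1 + I - (if z q \<in> (\<Union>j\<in>S\<epsilon>. sball M g W r (z j)) then 0 else r))"
      using cmod_certificate_le[of s, OF s] by (simp add: norm_mult mult_left_mono)
  qed
  also have "\<dots> = (\<Sum>q<N. (1 + I) * cmod (x q) - r * cmod (outer_part x q))"
    by (rule sum.cong) (auto simp: outer_part_def algebra_simps)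
  also have "\<dots> = (1 + I) * l1norm N x - r * l1norm N (outer_part x)"
    unfolding l1norm_def by (simp add: sum_distrib_left sum_subtractf)
  finally show ?thesis .
qed

definition effective_source :: "nat set \<Rightarrow> real \<Rightarrow> (nat \<Rightarrow> complex) \<Rightarrow> nat \<Rightarrow> complex" where
  "effective_source S \<epsilon> \<rho> j = (if j \<in> S\<epsilon> then
     (\<Sum>q\<in>{q\<in>S. z q \<in> sball M g W \<epsilon> (z j)}. \<rho> q * corr j q) else 0)"

context
  fixes S :: "nat set" and \<epsilon> :: real
  assumes S_sub: "S \<subseteq> {..<N}"
    and eps_le: "\<epsilon> \<le> r"
    and cover: "z ` S \<subseteq> (\<Union>q\<in>S\<epsilon>. sball M g W \<epsilon> (z q))"
begin

lemma in_eps_ball_iff_nearest: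
  assumes q: "q \<in> S" and j: "j \<in> S\<epsilon>"
  shows "z q \<in> sball M g W \<epsilon> (z j) \<longleftrightarrow> nn q = z j"
proof -
  have qN: "q < N" using q S_sub by auto
  have near: "nn q = z j'" if "j' \<in> S\<epsilon>" "z q \<in> sball M g W \<epsilon> (z j')" for j'
    using nearest_eq_if_close[OF qN that(1)] that(2) eps_le unfolding sball_def by auto
  obtain j' where j': "j' \<in> S\<epsilon>" "z q \<in> sball M g W \<epsilon> (z j')" using cover q by blast
  show ?thesis
    using near[OF j] near[OF j'] j' j inj_on_centres by (auto simp: inj_on_def)
qed

lemma l1norm_effective_source_le:
  assumes supp: "\<forall>j. j \<notin> S \<longrightarrow> \<rho> j = 0"
  defines "s \<equiv> \<lambda>j. sgn (effective_source S \<epsilon> \<rho> j)"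
  shows "l1norm N (effective_source S \<epsilon> \<rho>) - I * l1norm N \<rho>
    \<le> cmod (\<Sum>q<N. \<rho> q * certificate s q)"
proof -
  have finS: "finite S" using S_sub finite_nat_iff_bounded by blast
  have sum_S: "(\<Sum>q<N. f q) = (\<Sum>q\<in>S. f q)" if "\<And>q. q \<notin> S \<Longrightarrow> f q = 0"
    for f :: "nat \<Rightarrow> 'b::comm_monoid_add"
    by (rule sum.mono_neutral_right) (use S_sub that in auto)
  have s_le_1: "cmod (s j) \<le> 1" for j
    by (simp add: s_def norm_sgn)
  define near where
    "near q = (\<Sum>j\<in>S\<epsilon>. if z q \<in> sball M g W \<epsilon> (z j) then cnj (s j) * corr j q else 0)" for q
  have near_close: "cmod (certificate s q - near q) \<le> I" if q: "q \<in> S" for q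
  proof -
    have qN: "q < N" using q S_sub by auto
    obtain j0 where j0: "j0 \<in> S\<epsilon>" "nn q = z j0" using nearest_centre qN .
    have "near q = (\<Sum>j\<in>S\<epsilon>. if j = j0 then cnj (s j) * corr j q else 0)"
      unfolding near_def
      by (rule sum.cong) (use in_eps_ball_iff_nearest[OF q] j0 inj_on_centres in
          \<open>auto simp: inj_on_def\<close>)
    also have "\<dots> = cnj (s j0) * corr j0 q" using finite_centres j0 by simp
    finally show ?thesis
      using certificate_minus_nearest_le[OF s_le_1 qN j0] by simp
  qed
  have l1_eff: "l1norm N (effective_source S \<epsilon> \<rho>) = (\<Sum>j\<in>S\<epsilon>. cmod (effective_source S \<epsilon> \<rho> j))"
    unfolding l1norm_def
    by (rule sum.mono_neutral_right) (use centres_sub in \<open>auto simp: effective_source_def\<close>)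
  have "(\<Sum>q\<in>S. \<rho> q * near q)
      = (\<Sum>j\<in>S\<epsilon>. cnj (s j) * (\<Sum>q\<in>S. if z q \<in> sball M g W \<epsilon> (z j) then \<rho> q * corr j q else 0))"
    unfolding near_def
    by (simp add: sum_distrib_left sum.swap[of _ S] if_distrib mult_ac cong: if_cong)
  also have "\<dots> = (\<Sum>j\<in>S\<epsilon>. cnj (s j) * effective_source S \<epsilon> \<rho> j)"
    by (rule sum.cong) (simp_all add: effective_source_def sum.inter_filter[OF finS])
  also have "\<dots> = of_real (l1norm N (effective_source S \<epsilon> \<rho>))"
    unfolding s_def l1_eff by (simp add: cnj_sgn_mult)
  moreover have "(\<Sum>q<N. \<rho> q * certificate s q) = (\<Sum>q\<in>S. \<rho> q * certificate s q)"
    by (rule sum_S) (simp add: supp)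
  ultimately have split: "(\<Sum>q<N. \<rho> q * certificate s q)
      = of_real (l1norm N (effective_source S \<epsilon> \<rho>)) + (\<Sum>q\<in>S. \<rho> q * (certificate s q - near q))"
    by (simp add: algebra_simps sum.distrib sum_subtractf)
  have "cmod (\<Sum>q\<in>S. \<rho> q * (certificate s q - near q))
      \<le> (\<Sum>q\<in>S. cmod (\<rho> q * (certificate s q - near q)))"
    by (rule norm_sum)
  also have "\<dots> \<le> (\<Sum>q\<in>S. cmod (\<rho> q) * I)"
    by (rule sum_mono) (simp add: norm_mult near_close mult_left_mono)
  also have "\<dots> = I * l1norm N \<rho>"
  proof -
    have "l1norm N \<rho> = (\<Sum>q\<in>S. cmod (\<rho> q))"
      unfolding l1norm_def by (rule sum_S) (simp add: supp)
    then show ?thesis by (simp add: sum_distrib_right mult.commute)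
  qed
  finally have "cmod (\<Sum>q\<in>S. \<rho> q * (certificate s q - near q)) \<le> I * l1norm N \<rho>" .
  moreover have "l1norm N (effective_source S \<epsilon> \<rho>) \<ge> 0"
    unfolding l1norm_def by (simp add: sum_nonneg)
  ultimately show ?thesis
    unfolding split using norm_diff_ineq[of "of_real (l1norm N (effective_source S \<epsilon> \<rho>))"]
    by (smt (verit) norm_of_real)
qed

end

end

theorem theorem6:
  fixes W :: "'w set" and M N :: nat and g :: "'w \<Rightarrow> nat \<Rightarrow> complex"
    and z :: "nat \<Rightarrow> 'w" and S S\<epsilon> :: "nat set" and \<rho> \<rho>s :: "nat \<Rightarrow> complex"
    and \<epsilon> r :: real and nn :: "nat \<Rightarrow> 'w"
  assumes M_pos: "M \<ge> 1"
    and g_norm: "\<forall>y\<in>W. l2norm M (g y) = 1"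
    and z_in: "\<forall>j<N. z j \<in> W"
    and z_inj: "inj_on z {..<N}"
    and S_sub: "S \<subseteq> {..<N}"
    and \<rho>_supp: "\<forall>j. j \<notin> S \<longrightarrow> \<rho> j = 0"
    and eps: "0 < \<epsilon>" "\<epsilon> < r" "r < 1"
    and Se_sub: "S\<epsilon> \<subseteq> S"
    and cover: "z ` S \<subseteq> (\<Union>q\<in>S\<epsilon>. sball M g W \<epsilon> (z q))"
    and disj: "\<forall>q\<in>S\<epsilon>. \<forall>q'\<in>S\<epsilon>. q \<noteq> q' \<longrightarrow> sball M g W r (z q) \<inter> sball M g W r (z q') = {}"
    and nn: "\<forall>q<N. is_nearest M g (z ` S\<epsilon>) (z q) (nn q)"
    and I_lt: "interaction_coeff M N g z nn (z ` S\<epsilon>) < 1"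
    and \<rho>s_supp: "\<forall>j. j \<ge> N \<longrightarrow> \<rho>s j = 0"
    and \<rho>s_feas: "\<forall>i<M. Gmul N g z \<rho>s i = Gmul N g z \<rho> i"
    and \<rho>s_min: "\<forall>x. (\<forall>j. j \<ge> N \<longrightarrow> x j = 0) \<longrightarrow> (\<forall>i<M. Gmul N g z x i = Gmul N g z \<rho> i)
                    \<longrightarrow> l1norm N \<rho>s \<le> l1norm N x"
  shows "l1norm N (\<lambda>q. if z q \<in> (\<Union>j\<in>S\<epsilon>. sball M g W r (z j)) then 0 else \<rho>s q)
      \<le> 2 * interaction_coeff M N g z nn (z ` S\<epsilon>) / r * l1norm N \<rho>s
        + (l1norm N \<rho> - l1norm N (\<lambda>j. if j \<in> S\<epsilon> then
              (\<Sum>q\<in>{q\<in>S. z q \<in> sball M g W \<epsilon> (z j)}. \<rho> q * cinner M (g (z j)) (g (z q)))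
            else 0)) / r"
proof -
  interpret separated_centres W M N g z S\<epsilon> r nn
    using g_norm z_in z_inj Se_sub S_sub disj nn by unfold_locales auto
  define s where "s j = sgn (effective_source S \<epsilon> \<rho> j)" for j
  have upper: "cmod (\<Sum>q<N. \<rho>s q * certificate s q) \<le> (1 + I) * l1norm N \<rho>s - r * l1norm N (outer_part \<rho>s)"
    by (rule cmod_certificate_pairing_le) (simp add: s_def norm_sgn)
  have lower: "l1norm N (effective_source S \<epsilon> \<rho>) - I * l1norm N \<rho> \<le> cmod (\<Sum>q<N. \<rho> q * certificate s q)"
    unfolding s_def using l1norm_effective_source_le[OF S_sub _ cover \<rho>_supp] eps by simp
  have "\<forall>j. j \<ge> N \<longrightarrow> \<rho> j = 0"
    using \<rho>_supp S_sub by auto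
  then have "l1norm N \<rho>s \<le> l1norm N \<rho>"
    using \<rho>s_min by blast
  with I_lt have "0 \<le> (1 - I) * (l1norm N \<rho> - l1norm N \<rho>s)"
    by simp
  then have "(1 + I) * l1norm N \<rho>s + I * l1norm N \<rho> \<le> 2 * I * l1norm N \<rho>s + l1norm N \<rho>"
    by (simp add: algebra_simps)
  moreover note upper lower
  ultimately have "r * l1norm N (outer_part \<rho>s)
      \<le> 2 * I * l1norm N \<rho>s + (l1norm N \<rho> - l1norm N (effective_source S \<epsilon> \<rho>))"
    unfolding certificate_pairing_eq[OF \<rho>s_feas] by linarith
  with eps have "l1norm N (outer_part \<rho>s)
      \<le> (2 * I * l1norm N \<rho>s + (l1norm N \<rho> - l1norm N (effective_source S \<epsilon> \<rho>))) / r"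
    by (simp add: pos_le_divide_eq mult.commute)
  then have "l1norm N (outer_part \<rho>s)
      \<le> 2 * I / r * l1norm N \<rho>s + (l1norm N \<rho> - l1norm N (effective_source S \<epsilon> \<rho>)) / r"
    by (simp add: add_divide_distrib)
  then show ?thesis
    unfolding outer_part_def effective_source_def .
qed

end
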